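(* Let $K\ge 1$, let $V=V_1\sqcup\cdots\sqcup V_K$ be a finite vertex set with $|V_i|=n_i$, let $b:V\to\{1,\dots,K\}$ be the block membership function ($b(v)=i$ iff $v\in V_i$), and let $\Lambda\in(0,1)^{K\times K}$ be a symmetric matrix. Let $V=S\sqcup A$ (seeds $S$, ambiguous vertices $A$), with $m_i=|S\cap V_i|$, $m=\sum_i m_i$, $n=\sum_i n_i$, and assume $n_1-m_1\ge 1$. Then for every vertex nomination scheme $\mathcal{L}$ (in the sense defined in the context), the canonical vertex nomination scheme $\mathcal{L}^C$ satisfies $$MAP(\mathcal{L}^C)\ \ge\ MAP(\mathcal{L}),$$ where both mean average precisions are computed with respect to $\mathbf{G}\sim \mathrm{SBM}(K,\vec n,b,\Lambda)$.
   Context: SBM: A random graph $\mathbf{G}$ on $V$ is $\mathrm{SBM}(K,\vec n,b,\Lambda)$ if, for each unordered pair $\{u,v\}$ of distinct vertices, the edge $u\sim v$ is present independently with probability $\Lambda_{b(u),b(v)}$. Vertex nomination scheme: Let $\mathcal{G}$ be the set of all (simple, undirected) graphs on vertex set $V=S\sqcup A$, and suppose $S$, $A$ and the restriction $b|_S$ are given. A vertex nomination scheme is a function $\mathcal{L}$ assigning to each $G\in\mathcal{G}$ an ordering $(\mathcal{L}_{G,1},\dots,\mathcal{L}_{G,n-m})$ of $A$ (the nomination list), subject to: (i) every graph with a nontrivial automorphism is assigned the empty nomination list; (ii) for any asymmetric $G,H\in\mathcal{G}$ and any isomorphism $\gamma:G\to H$ that is the identity on $S$, $\gamma(\mathcal{L}_{G,i})=\mathcal{L}_{H,i}$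 for all $i$. Mean average precision: $MAP(\mathcal{L})=\mathbb{E}\Big(\frac{1}{n_1-m_1}\sum_{j=1}^{n_1-m_1}\frac{|\{i:1\le i\le j,\ b(\mathcal{L}_{\mathbf{G},i})=1\}|}{j}\Big)$, the expectation over $\mathbf{G}\sim\mathrm{SBM}(K,\vec n,b,\Lambda)$ (positions absent from an empty list contribute nothing). Canonical scheme: Let $\Phi$ be the set of functions $\varphi:V\to\{1,\dots,K\}$ with $\varphi(v)=b(v)$ for all $v\in S$ and $|\{v:\varphi(v)=i\}|=n_i$ for all $i$. For $G\in\mathcal{G}$ and $\varphi\in\Phi$, let $e^{G,\varphi}_{i,j}$ be the number of edges of $G$ with one endpoint mapped by $\varphi$ to $i$ and the other to $j$, and $c^{G,\varphi}_{i,j}=n_in_j-e^{G,\varphi}_{i,j}$ for $i\ne j$, $c^{G,\varphi}_{i,i}=\binom{n_i}{2}-e^{G,\varphi}_{i,i}$. Define for $v\in A$ $$\mathbb{Q}(\phi(v)=1\mid G)=\frac{\sum_{\varphi\in\Phi:\varphi(v)=1}\prod_{i=1}^K\prod_{j=i}^K\Lambda_{i,j}^{e^{G,\varphi}_{i,j}}(1-\Lambda_{i,j})^{c^{G,\varphi}_{i,j}}}{\sum_{\varphi\in\Phi}\prod_{i=1}^K\prod_{j=i}^K\Lambda_{i,j}^{e^{G,\varphi}_{i,j}}(1-\Lambda_{i,j})^{c^{G,\varphi}_{i,j}}},$$ i.e. the posterior probability that $v$ is in block 1 when $\varphi$ is drawn uniformly from $\Phi$ and then $G\sim\mathrm{SBM}(K,\vec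 n,\varphi,\Lambda)$. The canonical scheme $\mathcal{L}^C$ is the vertex nomination scheme which (for asymmetric $G$) lists the vertices of $A$ in nonincreasing order of $\mathbb{Q}(\phi(v)=1\mid G)$, ties broken arbitrarily. *)

theory Defs
  imports Complex_Main
begin

text \<open>Blocks are numbered 1..K (type nat); vertices have an arbitrary type 'v;
  the vertex set is a finite set V. A simple undirected graph on V is a set of
  2-element subsets of V (its edge set).\<close>

definition vpairs :: "'v set \<Rightarrow> 'v set set" where
  "vpairs V = {e. \<exists>u\<in>V. \<exists>w\<in>V. u \<noteq> w \<and> e = {u, w}}"

definition graphs :: "'v set \<Rightarrow> 'v set set set" where
  "graphs V = Pow (vpairs V)"

definition bsize :: "'v set \<Rightarrow> ('v \<Rightarrow> nat) \<Rightarrow> nat \<Rightarrow> nat" where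
  "bsize V b i = card {v\<in>V. b v = i}"

definition edge_prob :: "('v \<Rightarrow> nat) \<Rightarrow> (nat \<Rightarrow> nat \<Rightarrow> real) \<Rightarrow> 'v set \<Rightarrow> real" where
  "edge_prob b \<Lambda> e = \<Lambda> (Min (b ` e)) (Max (b ` e))"

definition sbm_prob :: "'v set \<Rightarrow> ('v \<Rightarrow> nat) \<Rightarrow> (nat \<Rightarrow> nat \<Rightarrow> real) \<Rightarrow> 'v set set \<Rightarrow> real" where
  "sbm_prob V b \<Lambda> G =
     (\<Prod>e\<in>vpairs V. if e \<in> G then edge_prob b \<Lambda> e else 1 - edge_prob b \<Lambda> e)"

definition is_iso :: "'v set \<Rightarrow> ('v \<Rightarrow> 'v) \<Rightarrow> 'v set set \<Rightarrow> 'v set set \<Rightarrow> bool" where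
  "is_iso V \<gamma> G H \<longleftrightarrow> bij_betw \<gamma> V V \<and> (\<lambda>e. \<gamma> ` e) ` G = H"

definition has_nontriv_aut :: "'v set \<Rightarrow> 'v set set \<Rightarrow> bool" where
  "has_nontriv_aut V G \<longleftrightarrow> (\<exists>\<sigma>. is_iso V \<sigma> G G \<and> (\<exists>v\<in>V. \<sigma> v \<noteq> v))"

definition is_vn_scheme ::
  "'v set \<Rightarrow> 'v set \<Rightarrow> 'v set \<Rightarrow> ('v set set \<Rightarrow> 'v list) \<Rightarrow> bool" where
  "is_vn_scheme V S A L \<longleftrightarrow>
     (\<forall>G\<in>graphs V. if has_nontriv_aut V G then L G = []
                    else distinct (L G) \<and> set (L G) = A) \<and>
     (\<forall>G\<in>graphs V. \<forall>H\<in>graphs V. \<forall>\<gamma>.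
        \<not> has_nontriv_aut V G \<longrightarrow> \<not> has_nontriv_aut V H \<longrightarrow>
        is_iso V \<gamma> G H \<longrightarrow> (\<forall>v\<in>S. \<gamma> v = v) \<longrightarrow>
        map \<gamma> (L G) = L H)"

text \<open>Average precision of a list, with r = n_1 - m_1; list positions are 0-based,
  positions absent from the list contribute nothing.\<close>
definition avg_prec :: "('v \<Rightarrow> nat) \<Rightarrow> nat \<Rightarrow> 'v list \<Rightarrow> real" where
  "avg_prec b r xs =
     (1 / real r) * (\<Sum>j=1..r. real (card {i. i < j \<and> i < length xs \<and> b (xs ! i) = 1}) / real j)"

definition MAP ::
  "'v set \<Rightarrow> 'v set \<Rightarrow> ('v \<Rightarrow> nat) \<Rightarrow> (nat \<Rightarrow> nat \<Rightarrow> real) \<Rightarrow> ('v set set \<Rightarrow> 'v list) \<Rightarrow> real" where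
  "MAP V S b \<Lambda> L =
     (\<Sum>G\<in>graphs V. sbm_prob V b \<Lambda> G *
        avg_prec b (bsize V b 1 - card {v\<in>S. b v = 1}) (L G))"

text \<open>The set Phi of admissible block assignments (functions V -> {1..K}, taken
  to be 0 outside V so that Phi is finite).\<close>
definition Phi :: "nat \<Rightarrow> 'v set \<Rightarrow> 'v set \<Rightarrow> ('v \<Rightarrow> nat) \<Rightarrow> ('v \<Rightarrow> nat) set" where
  "Phi K V S b = {\<phi>. (\<forall>v\<in>V. \<phi> v \<in> {1..K}) \<and> (\<forall>v. v \<notin> V \<longrightarrow> \<phi> v = 0) \<and>
       (\<forall>v\<in>S. \<phi> v = b v) \<and> (\<forall>i\<in>{1..K}. card {v\<in>V. \<phi> v = i} = bsize V b i)}"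

definition ecount :: "'v set set \<Rightarrow> ('v \<Rightarrow> nat) \<Rightarrow> nat \<Rightarrow> nat \<Rightarrow> nat" where
  "ecount G \<phi> i j = card {e\<in>G. \<phi> ` e = {i, j}}"

definition ccount :: "'v set \<Rightarrow> ('v \<Rightarrow> nat) \<Rightarrow> 'v set set \<Rightarrow> ('v \<Rightarrow> nat) \<Rightarrow> nat \<Rightarrow> nat \<Rightarrow> nat" where
  "ccount V b G \<phi> i j =
     (if i \<noteq> j then bsize V b i * bsize V b j - ecount G \<phi> i j
      else (bsize V b i choose 2) - ecount G \<phi> i i)"

definition lik :: "nat \<Rightarrow> 'v set \<Rightarrow> ('v \<Rightarrow> nat) \<Rightarrow> (nat \<Rightarrow> nat \<Rightarrow> real) \<Rightarrow> 'v set set \<Rightarrow> ('v \<Rightarrow> nat) \<Rightarrow> real" where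
  "lik K V b \<Lambda> G \<phi> =
     (\<Prod>i=1..K. \<Prod>j=i..K. \<Lambda> i j ^ ecount G \<phi> i j * (1 - \<Lambda> i j) ^ ccount V b G \<phi> i j)"

definition Qpost :: "nat \<Rightarrow> 'v set \<Rightarrow> 'v set \<Rightarrow> ('v \<Rightarrow> nat) \<Rightarrow> (nat \<Rightarrow> nat \<Rightarrow> real) \<Rightarrow> 'v set set \<Rightarrow> 'v \<Rightarrow> real" where
  "Qpost K V S b \<Lambda> G v =
     (\<Sum>\<phi>\<in>{\<phi>\<in>Phi K V S b. \<phi> v = 1}. lik K V b \<Lambda> G \<phi>) /
     (\<Sum>\<phi>\<in>Phi K V S b. lik K V b \<Lambda> G \<phi>)"

definition is_canonical_scheme ::
  "nat \<Rightarrow> 'v set \<Rightarrow> 'v set \<Rightarrow> 'v set \<Rightarrow> ('v \<Rightarrow> nat) \<Rightarrow> (nat \<Rightarrow> nat \<Rightarrow> real) \<Rightarrow> ('v set set \<Rightarrow> 'v list) \<Rightarrow> bool" where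
  "is_canonical_scheme K V S A b \<Lambda> L \<longleftrightarrow> is_vn_scheme V S A L \<and>
     (\<forall>G\<in>graphs V. \<not> has_nontriv_aut V G \<longrightarrow>
        sorted_wrt (\<lambda>u w. Qpost K V S b \<Lambda> G w \<le> Qpost K V S b \<Lambda> G u) (L G))"

end

theory Submission
  imports Defs "HOL-Combinatorics.Permutations"
begin

(* A permutation of V fixing the seeds carries SBM(b) to SBM(phi) for every admissible
   labelling phi, and every nomination scheme is equivariant under it; hence the MAP of a
   scheme is unchanged when b is replaced by phi, and averaging over the uniform phi turns it
   into a Bayes risk:  |Phi| MAP(L) = sum_G sum_phi P_phi(G) AP_phi(L G).  For fixed G the
   inner sum is (1/r) sum_j (1/j) W(first j entries of L G), where W(v) is the posterior
   mass of "phi v = 1", proportional to Q(phi(v) = 1 | G).  A list ordered by decreasing W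
   maximizes every prefix sum, and this is exactly the canonical list. *)

section \<open>Relabelling the vertices\<close>

abbreviation graph_image :: "('v \<Rightarrow> 'v) \<Rightarrow> 'v set set \<Rightarrow> 'v set set" where
  "graph_image \<sigma> G \<equiv> (\<lambda>e. \<sigma> ` e) ` G"

lemma vpairsE:
  assumes "e \<in> vpairs V"
  obtains u w where "u \<in> V" "w \<in> V" "u \<noteq> w" "e = {u, w}"
  using assms unfolding vpairs_def by blast

lemma vpairs_subset: "e \<in> vpairs V \<Longrightarrow> e \<subseteq> V"
  unfolding vpairs_def by auto

lemma finite_vpairs: "finite V \<Longrightarrow> finite (vpairs V)"
  by (rule finite_subset[of _ "Pow V"]) (auto simp: vpairs_def)

lemma graphs_edge_in_vpairs: "G \<in> graphs V \<Longrightarrow> e \<in> G \<Longrightarrow> e \<in> vpairs V"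
  unfolding graphs_def by auto

lemma permutes_image_vpairs:
  assumes "\<sigma> permutes V" and "e \<in> vpairs V"
  shows "\<sigma> ` e \<in> vpairs V"
proof -
  obtain u w where "u \<in> V" "w \<in> V" "u \<noteq> w" "e = {u, w}"
    using assms(2) by (rule vpairsE)
  moreover have "\<sigma> u \<noteq> \<sigma> w"
    using permutes_inj[OF assms(1)] \<open>u \<noteq> w\<close> by (auto dest: injD)
  ultimately show ?thesis
    unfolding vpairs_def using permutes_in_image[OF assms(1)] by blast
qed

lemma graph_image_inv:
  "\<sigma> permutes V \<Longrightarrow> graph_image (inv \<sigma>) (graph_image \<sigma> G) = G"
  "\<sigma> permutes V \<Longrightarrow> graph_image \<sigma> (graph_image (inv \<sigma>) G) = G"
  by (simp_all add: image_image permutes_inverses)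

lemma graph_image_in_graphs:
  "\<sigma> permutes V \<Longrightarrow> G \<in> graphs V \<Longrightarrow> graph_image \<sigma> G \<in> graphs V"
  unfolding graphs_def by (auto intro: permutes_image_vpairs)

lemma bij_betw_graph_image:
  assumes "\<sigma> permutes V"
  shows "bij_betw (graph_image \<sigma>) (graphs V) (graphs V)"
  by (rule bij_betw_byWitness[where f' = "graph_image (inv \<sigma>)"])
    (use assms permutes_inv[OF assms] in \<open>auto simp: graph_image_inv graph_image_in_graphs\<close>)

lemma has_nontriv_aut_graph_image:
  assumes \<sigma>: "\<sigma> permutes V" and aut: "has_nontriv_aut V G"
  shows "has_nontriv_aut V (graph_image \<sigma> G)"
proof -
  obtain \<tau> v where \<tau>: "is_iso V \<tau> G G" and v: "v \<in> V" "\<tau> v \<noteq> v"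
    using aut unfolding has_nontriv_aut_def by blast
  define \<rho> where "\<rho> = \<sigma> \<circ> \<tau> \<circ> inv \<sigma>"
  have "bij_betw \<rho> V V"
    unfolding \<rho>_def using \<tau> permutes_imp_bij[OF \<sigma>] permutes_imp_bij[OF permutes_inv[OF \<sigma>]]
    by (auto simp: is_iso_def intro: bij_betw_trans)
  moreover have "graph_image \<rho> (graph_image \<sigma> G) = graph_image \<sigma> (graph_image \<tau> G)"
    unfolding \<rho>_def by (simp add: image_image permutes_inverses[OF \<sigma>])
  ultimately have "is_iso V \<rho> (graph_image \<sigma> G) (graph_image \<sigma> G)"
    using \<tau> unfolding is_iso_def by simp
  moreover have "\<rho> (\<sigma> v) \<noteq> \<sigma> v"
    using v permutes_inj[OF \<sigma>] by (auto simp: \<rho>_def permutes_inverses[OF \<sigma>] dest: injD)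
  moreover have "\<sigma> v \<in> V"
    using v permutes_in_image[OF \<sigma>] by simp
  ultimately show ?thesis
    unfolding has_nontriv_aut_def by blast
qed

lemma has_nontriv_aut_graph_image_iff:
  assumes "\<sigma> permutes V"
  shows "has_nontriv_aut V (graph_image \<sigma> G) \<longleftrightarrow> has_nontriv_aut V G"
  using has_nontriv_aut_graph_image[OF assms]
    has_nontriv_aut_graph_image[OF permutes_inv[OF assms], of "graph_image \<sigma> G"]
  by (auto simp: graph_image_inv[OF assms])

lemma sbm_prob_graph_image:
  assumes \<sigma>: "\<sigma> permutes V" and relabel: "\<forall>v\<in>V. \<phi> v = b (\<sigma> v)"
  shows "sbm_prob V \<phi> \<Lambda> G = sbm_prob V b \<Lambda> (graph_image \<sigma> G)"
proof -
  let ?F = "\<lambda>H b e. if e \<in> H then edge_prob b \<Lambda> e else 1 - edge_prob b \<Lambda> e"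
  have "bij_betw (image \<sigma>) (vpairs V) (vpairs V)"
    by (rule bij_betw_byWitness[where f' = "image (inv \<sigma>)"])
      (use \<sigma> permutes_inv[OF \<sigma>] in \<open>auto simp: image_image permutes_inverses permutes_image_vpairs\<close>)
  then have "sbm_prob V b \<Lambda> (graph_image \<sigma> G) = (\<Prod>e\<in>vpairs V. ?F (graph_image \<sigma> G) b (\<sigma> ` e))"
    unfolding sbm_prob_def by (rule prod.reindex_bij_betw[symmetric])
  also have "\<dots> = (\<Prod>e\<in>vpairs V. ?F G \<phi> e)"
  proof (rule prod.cong[OF refl])
    fix e assume "e \<in> vpairs V"
    then have "b ` \<sigma> ` e = \<phi> ` e"
      using relabel vpairs_subset by (force simp: image_image)
    moreover have "\<sigma> ` e \<in> graph_image \<sigma> G \<longleftrightarrow> e \<in> G"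
      by (auto simp: inj_image_eq_iff[OF permutes_inj[OF \<sigma>]])
    ultimately show "?F (graph_image \<sigma> G) b (\<sigma> ` e) = ?F G \<phi> e"
      unfolding edge_prob_def by simp
  qed
  finally show ?thesis unfolding sbm_prob_def by simp
qed

lemma avg_prec_map:
  "\<forall>v\<in>set xs. \<phi> v = b (\<sigma> v) \<Longrightarrow> avg_prec b r (map \<sigma> xs) = avg_prec \<phi> r xs"
  unfolding avg_prec_def by (simp cong: conj_cong)

lemma is_vn_schemeD:
  assumes "is_vn_scheme V S A X" and "G \<in> graphs V"
  shows "has_nontriv_aut V G \<Longrightarrow> X G = []"
    and "\<not> has_nontriv_aut V G \<Longrightarrow> distinct (X G) \<and> set (X G) = A"
    and "\<lbrakk>H \<in> graphs V; \<not> has_nontriv_aut V G; \<not> has_nontriv_aut V H; is_iso V \<gamma> G H;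
          \<forall>v\<in>S. \<gamma> v = v\<rbrakk> \<Longrightarrow> map \<gamma> (X G) = X H"
  using assms unfolding is_vn_scheme_def by (auto split: if_splits)

lemma expected_avg_prec_relabel:
  assumes X: "is_vn_scheme V S A X" and \<sigma>: "\<sigma> permutes A"
    and SA: "S \<union> A = V" "S \<inter> A = {}" and relabel: "\<forall>v\<in>V. \<phi> v = b (\<sigma> v)"
  shows "(\<Sum>G\<in>graphs V. sbm_prob V \<phi> \<Lambda> G * avg_prec \<phi> r (X G)) =
         (\<Sum>G\<in>graphs V. sbm_prob V b \<Lambda> G * avg_prec b r (X G))"
proof -
  have \<sigma>V: "\<sigma> permutes V"
    using \<sigma> SA by (blast intro: permutes_subset)
  have fixS: "\<forall>v\<in>S. \<sigma> v = v"
    using \<sigma> SA by (blast intro: permutes_not_in)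
  have "avg_prec \<phi> r (X G) = avg_prec b r (X (graph_image \<sigma> G))" if G: "G \<in> graphs V" for G
  proof (cases "has_nontriv_aut V G")
    case True
    then show ?thesis
      using is_vn_schemeD(1)[OF X] G graph_image_in_graphs[OF \<sigma>V G]
      by (simp add: has_nontriv_aut_graph_image_iff[OF \<sigma>V] avg_prec_def)
  next
    case False
    have "map \<sigma> (X G) = X (graph_image \<sigma> G)"
      using is_vn_schemeD(3)[OF X G graph_image_in_graphs[OF \<sigma>V G] False] False fixS \<sigma>V
      by (simp add: has_nontriv_aut_graph_image_iff is_iso_def permutes_imp_bij)
    moreover have "\<forall>v\<in>set (X G). \<phi> v = b (\<sigma> v)"
      using is_vn_schemeD(2)[OF X G False] SA relabel by blast
    ultimately show ?thesis
      by (metis avg_prec_map)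
  qed
  then have "(\<Sum>G\<in>graphs V. sbm_prob V \<phi> \<Lambda> G * avg_prec \<phi> r (X G)) =
      (\<Sum>G\<in>graphs V. sbm_prob V b \<Lambda> (graph_image \<sigma> G) * avg_prec b r (X (graph_image \<sigma> G)))"
    using sbm_prob_graph_image[OF \<sigma>V relabel] by simp
  also have "\<dots> = (\<Sum>G\<in>graphs V. sbm_prob V b \<Lambda> G * avg_prec b r (X G))"
    by (rule sum.reindex_bij_betw[OF bij_betw_graph_image[OF \<sigma>V]])
  finally show ?thesis .
qed

section \<open>Admissible block assignments\<close>

lemma permutes_relabelling:
  assumes "finite A" and "\<And>i. card {v\<in>A. \<phi> v = i} = card {v\<in>A. b v = i}"
  obtains \<sigma> where "\<sigma> permutes A" and "\<forall>v\<in>A. \<phi> v = b (\<sigma> v)"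
proof -
  have "\<forall>i. \<exists>h. bij_betw h {v\<in>A. \<phi> v = i} {v\<in>A. b v = i}"
    using assms by (auto intro!: finite_same_card_bij)
  then obtain g where g: "\<And>i. bij_betw (g i) {v\<in>A. \<phi> v = i} {v\<in>A. b v = i}"
    by metis
  define \<sigma> where "\<sigma> v = (if v \<in> A then g (\<phi> v) v else v)" for v
  have "bij_betw \<sigma> (\<Union>i. {v\<in>A. \<phi> v = i}) (\<Union>i. {v\<in>A. b v = i})"
  proof (rule bij_betw_UNION_disjoint)
    show "disjoint_family_on (\<lambda>i. {v\<in>A. b v = i}) UNIV"
      by (auto simp: disjoint_family_on_def)
    show "bij_betw \<sigma> {v\<in>A. \<phi> v = i} {v\<in>A. b v = i}" for i
      using g[of i] by (rule bij_betw_cong[THEN iffD1, rotated]) (simp add: \<sigma>_def)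
  qed
  moreover have "(\<Union>i. {v\<in>A. f v = i}) = A" for f :: "'a \<Rightarrow> 'b"
    by blast
  ultimately have "bij_betw \<sigma> A A"
    by simp
  then have "\<sigma> permutes A"
    by (rule bij_imp_permutes) (simp add: \<sigma>_def)
  moreover have "\<phi> v = b (\<sigma> v)" if "v \<in> A" for v
    using bij_betwE[OF g[of "\<phi> v"]] that by (simp add: \<sigma>_def)
  ultimately show ?thesis
    using that by blast
qed

lemma PhiD:
  assumes "\<phi> \<in> Phi K V S b"
  shows "\<forall>v\<in>V. \<phi> v \<in> {1..K}" and "\<forall>i\<in>{1..K}. card {v\<in>V. \<phi> v = i} = bsize V b i"
  using assms unfolding Phi_def by auto

lemma finite_Phi:
  assumes "finite V"
  shows "finite (Phi K V S b)"
proof (rule finite_subset)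
  show "Phi K V S b \<subseteq> {\<phi>. \<forall>x. (x \<in> V \<longrightarrow> \<phi> x \<in> {0..K}) \<and> (x \<notin> V \<longrightarrow> \<phi> x = 0)}"
    unfolding Phi_def by auto
  show "finite {\<phi>. \<forall>x. (x \<in> V \<longrightarrow> \<phi> x \<in> {0..K}) \<and> (x \<notin> V \<longrightarrow> \<phi> x = (0::nat))}"
    using assms by (rule finite_set_of_finite_funs) auto
qed

lemma restrict_block_map_in_Phi:
  assumes "\<forall>v\<in>V. b v \<in> {1..K}" and "S \<subseteq> V"
  shows "(\<lambda>v. if v \<in> V then b v else 0) \<in> Phi K V S b"
proof -
  have "{v\<in>V. (if v \<in> V then b v else 0) = i} = {v\<in>V. b v = i}" for i
    by auto
  then show ?thesis
    using assms unfolding Phi_def bsize_def by auto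
qed

lemma card_ambiguous_block_Phi:
  assumes "finite V" and SA: "S \<union> A = V" "S \<inter> A = {}" and "\<forall>v\<in>V. b v \<in> {1..K}"
    and "\<phi> \<in> Phi K V S b"
  shows "card {v\<in>A. \<phi> v = i} = card {v\<in>A. b v = i}"
proof (cases "i \<in> {1..K}")
  case True
  have card_split: "card {v\<in>V. f v = i} = card {v\<in>S. f v = i} + card {v\<in>A. f v = i}" for f :: "'a \<Rightarrow> nat"
  proof -
    have "{v\<in>V. f v = i} = {v\<in>S. f v = i} \<union> {v\<in>A. f v = i}"
      using SA by blast
    moreover have "finite {v\<in>S. f v = i}" "finite {v\<in>A. f v = i}"
      using assms(1) SA by auto
    moreover have "{v\<in>S. f v = i} \<inter> {v\<in>A. f v = i} = {}"
      using SA by blast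
    ultimately show ?thesis
      by (simp add: card_Un_disjoint)
  qed
  have "{v\<in>S. \<phi> v = i} = {v\<in>S. b v = i}" and "card {v\<in>V. \<phi> v = i} = card {v\<in>V. b v = i}"
    using assms(5) True unfolding Phi_def bsize_def by auto
  then show ?thesis
    using card_split[of \<phi>] card_split[of b] by simp
next
  case False
  then have "{v\<in>A. \<phi> v = i} = {}" and "{v\<in>A. b v = i} = {}"
    using assms(4,5) SA unfolding Phi_def by auto
  then show ?thesis
    by (simp only:)
qed

section \<open>The likelihood of a block assignment\<close>

lemma card_vpairs_between_blocks:
  assumes "i \<noteq> j"
  shows "card {e\<in>vpairs V. \<phi> ` e = {i, j}} = card {v\<in>V. \<phi> v = i} * card {v\<in>V. \<phi> v = j}"
proof -
  let ?Vi = "{v\<in>V. \<phi> v = i}" and ?Vj = "{v\<in>V. \<phi> v = j}"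
  have "{e\<in>vpairs V. \<phi> ` e = {i, j}} = (\<lambda>(u, w). {u, w}) ` (?Vi \<times> ?Vj)"
  proof (intro set_eqI iffI)
    fix e assume "e \<in> {e\<in>vpairs V. \<phi> ` e = {i, j}}"
    then obtain u w where "u \<in> V" "w \<in> V" "e = {u, w}" "{\<phi> u, \<phi> w} = {i, j}"
      by (auto elim: vpairsE)
    then have "(u, w) \<in> ?Vi \<times> ?Vj \<and> e = {u, w} \<or> (w, u) \<in> ?Vi \<times> ?Vj \<and> e = {w, u}"
      by (auto simp: doubleton_eq_iff)
    then show "e \<in> (\<lambda>(u, w). {u, w}) ` (?Vi \<times> ?Vj)"
      by (auto intro: rev_image_eqI)
  next
    fix e assume "e \<in> (\<lambda>(u, w). {u, w}) ` (?Vi \<times> ?Vj)"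
    then obtain u w where uw: "u \<in> ?Vi" "w \<in> ?Vj" "e = {u, w}"
      by blast
    with assms have "u \<noteq> w"
      by blast
    with uw show "e \<in> {e\<in>vpairs V. \<phi> ` e = {i, j}}"
      unfolding vpairs_def by blast
  qed
  moreover have "inj_on (\<lambda>(u, w). {u, w}) (?Vi \<times> ?Vj)"
    using assms by (auto simp: inj_on_def doubleton_eq_iff)
  ultimately show ?thesis
    by (simp add: card_image card_cartesian_product)
qed

lemma card_vpairs_within_block:
  assumes "finite V"
  shows "card {e\<in>vpairs V. \<phi> ` e = {i}} = card {v\<in>V. \<phi> v = i} choose 2"
proof -
  have "{e\<in>vpairs V. \<phi> ` e = {i}} = {B. B \<subseteq> {v\<in>V. \<phi> v = i} \<and> card B = 2}"
  proof (intro set_eqI iffI)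
    fix e assume "e \<in> {e\<in>vpairs V. \<phi> ` e = {i}}"
    then show "e \<in> {B. B \<subseteq> {v\<in>V. \<phi> v = i} \<and> card B = 2}"
      by (auto elim: vpairsE)
  next
    fix e assume "e \<in> {B. B \<subseteq> {v\<in>V. \<phi> v = i} \<and> card B = 2}"
    then obtain u w where "e = {u, w}" "u \<noteq> w" "e \<subseteq> {v\<in>V. \<phi> v = i}"
      by (auto simp: card_2_iff)
    then show "e \<in> {e\<in>vpairs V. \<phi> ` e = {i}}"
      unfolding vpairs_def by auto
  qed
  then show ?thesis
    using assms by (simp add: n_subsets)
qed

lemma prod_edge_factors_block_pair:
  assumes "finite V" and "G \<in> graphs V" and "i \<le> j"
    and "card {v\<in>V. \<phi> v = i} = bsize V b i" and "card {v\<in>V. \<phi> v = j} = bsize V b j"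
  shows "(\<Prod>e\<in>{e\<in>vpairs V. \<phi> ` e = {i, j}}.
            if e \<in> G then edge_prob \<phi> \<Lambda> e else 1 - edge_prob \<phi> \<Lambda> e)
         = \<Lambda> i j ^ ecount G \<phi> i j * (1 - \<Lambda> i j) ^ ccount V b G \<phi> i j"
proof -
  define C where "C = {e\<in>vpairs V. \<phi> ` e = {i, j}}"
  have finC: "finite C"
    unfolding C_def using finite_vpairs[OF assms(1)] by simp
  have edges: "C \<inter> G = {e\<in>G. \<phi> ` e = {i, j}}"
    unfolding C_def using graphs_edge_in_vpairs[OF assms(2)] by auto
  have "edge_prob \<phi> \<Lambda> e = \<Lambda> i j" if "e \<in> C" for e
    using that assms(3) unfolding C_def edge_prob_def by (simp add: min_def max_def)
  then have "(\<Prod>e\<in>C. if e \<in> G then edge_prob \<phi> \<Lambda> e else 1 - edge_prob \<phi> \<Lambda> e)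
      = (\<Prod>e\<in>C. if e \<in> G then \<Lambda> i j else 1 - \<Lambda> i j)"
    by (intro prod.cong) auto
  also have "\<dots> = \<Lambda> i j ^ card (C \<inter> G) * (1 - \<Lambda> i j) ^ (card C - card (C \<inter> G))"
    using finC by (simp add: prod.If_cases Diff_eq[symmetric] card_Diff_subset_Int)
  also have "card C = (if i \<noteq> j then bsize V b i * bsize V b j else bsize V b i choose 2)"
    unfolding C_def using assms(1,4,5)
    by (simp add: card_vpairs_between_blocks card_vpairs_within_block)
  finally show ?thesis
    unfolding C_def ccount_def ecount_def edges[unfolded C_def] by simp
qed

lemma sbm_prob_eq_lik:
  assumes "finite V" and "G \<in> graphs V" and "\<forall>v\<in>V. \<phi> v \<in> {1..K}"
    and "\<forall>i\<in>{1..K}. card {v\<in>V. \<phi> v = i} = bsize V b i"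
  shows "sbm_prob V \<phi> \<Lambda> G = lik K V b \<Lambda> G \<phi>"
proof -
  let ?I = "Sigma {1..K} (\<lambda>i. {i..K})"
  let ?pair = "\<lambda>e. (Min (\<phi> ` e), Max (\<phi> ` e))"
  let ?F = "\<lambda>e. if e \<in> G then edge_prob \<phi> \<Lambda> e else 1 - edge_prob \<phi> \<Lambda> e"
  have "?pair ` vpairs V \<subseteq> ?I"
    using assms(3) by (auto elim!: vpairsE simp: min_def max_def)
  then have "sbm_prob V \<phi> \<Lambda> G = (\<Prod>y\<in>?I. \<Prod>e\<in>{e\<in>vpairs V. ?pair e = y}. ?F e)"
    unfolding sbm_prob_def using finite_vpairs[OF assms(1)]
    by (intro prod.group[symmetric]) auto
  also have "\<dots> = (\<Prod>(i, j)\<in>?I. \<Lambda> i j ^ ecount G \<phi> i j * (1 - \<Lambda> i j) ^ ccount V b G \<phi> i j)"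
  proof (rule prod.cong[OF refl])
    fix y assume "y \<in> ?I"
    then obtain i j where y: "y = (i, j)" and ij: "i \<in> {1..K}" "j \<in> {i..K}"
      by blast
    have "?pair e = (i, j) \<longleftrightarrow> \<phi> ` e = {i, j}" if "e \<in> vpairs V" for e
      using that ij by (auto elim!: vpairsE simp: min_def max_def doubleton_eq_iff split: if_split_asm)
    then have "{e\<in>vpairs V. ?pair e = (i, j)} = {e\<in>vpairs V. \<phi> ` e = {i, j}}"
      by blast
    then show "(\<Prod>e\<in>{e\<in>vpairs V. ?pair e = y}. ?F e)
        = (case y of (i, j) \<Rightarrow> \<Lambda> i j ^ ecount G \<phi> i j * (1 - \<Lambda> i j) ^ ccount V b G \<phi> i j)"
      using ij assms by (simp add: y prod_edge_factors_block_pair)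
  qed
  also have "\<dots> = lik K V b \<Lambda> G \<phi>"
    unfolding lik_def by (rule prod.Sigma[symmetric]) auto
  finally show ?thesis .
qed

lemma sbm_prob_pos:
  assumes "\<forall>v\<in>V. \<phi> v \<in> {1..K}" and "\<forall>i\<in>{1..K}. \<forall>j\<in>{1..K}. 0 < \<Lambda> i j \<and> \<Lambda> i j < 1"
  shows "0 < sbm_prob V \<phi> \<Lambda> G"
  unfolding sbm_prob_def
proof (rule prod_pos)
  fix e assume "e \<in> vpairs V"
  then have "0 < edge_prob \<phi> \<Lambda> e \<and> edge_prob \<phi> \<Lambda> e < 1"
    using assms by (auto elim!: vpairsE simp: edge_prob_def min_def max_def)
  then show "0 < (if e \<in> G then edge_prob \<phi> \<Lambda> e else 1 - edge_prob \<phi> \<Lambda> e)"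
    by simp
qed

section \<open>Prefix sums and average precision\<close>

lemma sum_le_sum_take_sorted:
  fixes f :: "'a \<Rightarrow> real"
  assumes sorted: "sorted_wrt (\<lambda>u w. f w \<le> f u) ys" and T: "T \<subseteq> set ys"
    and card_T: "card T = card (set (take j ys))"
  shows "sum f T \<le> sum f (set (take j ys))"
proof -
  define P where "P = set (take j ys)"
  have fin: "finite T" "finite P"
    using T finite_subset unfolding P_def by auto
  have exchange: "f x \<le> f y" if "x \<in> T - P" and "y \<in> P - T" for x y
  proof -
    have "sorted_wrt (\<lambda>u w. f w \<le> f u) (take j ys @ drop j ys)"
      using sorted by simp
    then have prefix_dominates: "\<forall>a\<in>P. \<forall>b\<in>set (drop j ys). f b \<le> f a"
      unfolding P_def sorted_wrt_append by blast
    have "set ys = P \<union> set (drop j ys)"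
      unfolding P_def by (metis append_take_drop_id set_append)
    then have "x \<in> set (drop j ys)"
      using that T by blast
    then show ?thesis
      using that prefix_dominates by blast
  qed
  have card_eq: "card (T - P) = card (P - T)"
    using card_T fin unfolding P_def by (simp add: card_Diff_subset_Int Int_commute)
  have "real (card (T - P)) * sum f (T - P) = (\<Sum>y\<in>P - T. \<Sum>x\<in>T - P. f x)"
    using card_eq by simp
  also have "\<dots> \<le> (\<Sum>y\<in>P - T. \<Sum>x\<in>T - P. f y)"
    by (intro sum_mono) (rule exchange)
  also have "\<dots> = real (card (T - P)) * sum f (P - T)"
    by (simp add: sum_distrib_left)
  finally have "sum f (T - P) \<le> sum f (P - T)"
    using card_eq fin by (cases "card (T - P) = 0") auto
  moreover have "sum f T = sum f (T \<inter> P) + sum f (T - P)" "sum f P = sum f (P \<inter> T) + sum f (P - T)"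
    using fin by (simp_all add: sum.Int_Diff)
  ultimately show ?thesis
    unfolding P_def by (simp add: Int_commute)
qed

lemma card_prefix_block1:
  assumes "distinct xs"
  shows "card {i. i < j \<and> i < length xs \<and> \<phi> (xs ! i) = 1} = card {v\<in>set (take j xs). \<phi> v = 1}"
proof -
  have "{v\<in>set (take j xs). \<phi> v = 1} = (\<lambda>i. xs ! i) ` {i. i < j \<and> i < length xs \<and> \<phi> (xs ! i) = 1}"
    by (auto simp: in_set_conv_nth)
  moreover have "inj_on (\<lambda>i. xs ! i) {i. i < j \<and> i < length xs \<and> \<phi> (xs ! i) = 1}"
    using assms by (auto simp: inj_on_def nth_eq_iff_index_eq)
  ultimately show ?thesis
    by (simp add: card_image)
qed

lemma sum_weighted_avg_prec:
  fixes p :: "('v \<Rightarrow> nat) \<Rightarrow> real"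
  assumes "finite \<Phi>" and "distinct xs"
  shows "(\<Sum>\<phi>\<in>\<Phi>. p \<phi> * avg_prec \<phi> r xs)
    = 1 / real r * (\<Sum>j=1..r. (\<Sum>v\<in>set (take j xs). sum p {\<phi>\<in>\<Phi>. \<phi> v = 1}) / real j)"
proof -
  have "(\<Sum>\<phi>\<in>\<Phi>. p \<phi> * real (card {v\<in>T. \<phi> v = 1})) = (\<Sum>v\<in>T. sum p {\<phi>\<in>\<Phi>. \<phi> v = 1})"
    if "finite T" for T :: "'v set"
  proof -
    have "p \<phi> * real (card {v\<in>T. \<phi> v = 1}) = (\<Sum>v\<in>T. if \<phi> v = 1 then p \<phi> else 0)" for \<phi>
      using that by (simp add: sum.If_cases Collect_conj_eq Int_commute)
    then have "(\<Sum>\<phi>\<in>\<Phi>. p \<phi> * real (card {v\<in>T. \<phi> v = 1}))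
        = (\<Sum>v\<in>T. \<Sum>\<phi>\<in>\<Phi>. if \<phi> v = 1 then p \<phi> else 0)"
      by (simp add: sum.swap[of _ \<Phi>])
    also have "\<dots> = (\<Sum>v\<in>T. sum p {\<phi>\<in>\<Phi>. \<phi> v = 1})"
      using assms(1) by (simp add: sum.inter_filter)
    finally show ?thesis .
  qed
  moreover have "(\<Sum>\<phi>\<in>\<Phi>. p \<phi> * avg_prec \<phi> r xs)
      = 1 / real r * (\<Sum>j=1..r. (\<Sum>\<phi>\<in>\<Phi>. p \<phi> * real (card {v\<in>set (take j xs). \<phi> v = 1})) / real j)"
    unfolding avg_prec_def card_prefix_block1[OF assms(2)]
    by (simp add: sum_distrib_left sum_divide_distrib mult_ac sum.swap[of _ \<Phi>])
  ultimately show ?thesis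
    by simp
qed

lemma sum_weighted_avg_prec_le_sorted:
  fixes p :: "('v \<Rightarrow> nat) \<Rightarrow> real"
  assumes "finite \<Phi>" and xs: "distinct xs" and ys: "distinct ys" and "set xs = set ys"
    and sorted: "sorted_wrt (\<lambda>u w. sum p {\<phi>\<in>\<Phi>. \<phi> w = 1} \<le> sum p {\<phi>\<in>\<Phi>. \<phi> u = 1}) ys"
  shows "(\<Sum>\<phi>\<in>\<Phi>. p \<phi> * avg_prec \<phi> r xs) \<le> (\<Sum>\<phi>\<in>\<Phi>. p \<phi> * avg_prec \<phi> r ys)"
  unfolding sum_weighted_avg_prec[OF assms(1) xs] sum_weighted_avg_prec[OF assms(1) ys]
proof (intro mult_left_mono sum_mono divide_right_mono)
  fix j
  have "length xs = length ys"
    using assms(4) xs ys by (metis distinct_card)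
  then have "card (set (take j xs)) = card (set (take j ys))"
    using xs ys by (simp add: distinct_card)
  moreover have "set (take j xs) \<subseteq> set ys"
    using assms(4) set_take_subset by metis
  ultimately show "(\<Sum>v\<in>set (take j xs). sum p {\<phi>\<in>\<Phi>. \<phi> v = 1})
      \<le> (\<Sum>v\<in>set (take j ys). sum p {\<phi>\<in>\<Phi>. \<phi> v = 1})"
    using sum_le_sum_take_sorted[OF sorted] by blast
qed auto

section \<open>Mean average precision as a Bayes risk\<close>

lemma is_canonical_schemeD:
  assumes "is_canonical_scheme K V S A b \<Lambda> LC"
  shows "is_vn_scheme V S A LC"
    and "\<lbrakk>G \<in> graphs V; \<not> has_nontriv_aut V G\<rbrakk> \<Longrightarrow>
           sorted_wrt (\<lambda>u w. Qpost K V S b \<Lambda> G w \<le> Qpost K V S b \<Lambda> G u) (LC G)"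
  using assms unfolding is_canonical_scheme_def by auto

locale seeded_sbm =
  fixes K :: nat and V S A :: "'v set" and b :: "'v \<Rightarrow> nat" and \<Lambda> :: "nat \<Rightarrow> nat \<Rightarrow> real"
  assumes finite_V: "finite V"
    and blocks: "\<forall>v\<in>V. b v \<in> {1..K}"
    and edge_probs: "\<forall>i\<in>{1..K}. \<forall>j\<in>{1..K}. 0 < \<Lambda> i j \<and> \<Lambda> i j < 1"
    and seeds_ambiguous: "S \<union> A = V" "S \<inter> A = {}"
begin

lemma Phi_nonempty: "Phi K V S b \<noteq> {}"
  using restrict_block_map_in_Phi[OF blocks] seeds_ambiguous by blast

lemma expected_avg_prec_Phi:
  assumes "is_vn_scheme V S A X" and "\<phi> \<in> Phi K V S b"
  shows "(\<Sum>G\<in>graphs V. sbm_prob V \<phi> \<Lambda> G * avg_prec \<phi> r (X G)) =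
         (\<Sum>G\<in>graphs V. sbm_prob V b \<Lambda> G * avg_prec b r (X G))"
proof -
  have "finite A"
    using finite_V seeds_ambiguous by blast
  then obtain \<sigma> where \<sigma>: "\<sigma> permutes A" and relabel: "\<forall>v\<in>A. \<phi> v = b (\<sigma> v)"
    using permutes_relabelling card_ambiguous_block_Phi[OF finite_V seeds_ambiguous blocks assms(2)]
    by blast
  moreover have "\<forall>v\<in>S. \<phi> v = b v"
    using assms(2) unfolding Phi_def by blast
  ultimately have "\<forall>v\<in>V. \<phi> v = b (\<sigma> v)"
    using permutes_not_in[OF \<sigma>] seeds_ambiguous by (metis UnE disjoint_iff)
  then show ?thesis
    using expected_avg_prec_relabel[OF assms(1) \<sigma> seeds_ambiguous] by blast
qed

lemma MAP_average_over_Phi: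
  assumes "is_vn_scheme V S A X"
  shows "real (card (Phi K V S b)) * MAP V S b \<Lambda> X =
    (\<Sum>G\<in>graphs V. \<Sum>\<phi>\<in>Phi K V S b.
       sbm_prob V \<phi> \<Lambda> G * avg_prec \<phi> (bsize V b 1 - card {v\<in>S. b v = 1}) (X G))"
proof -
  have "real (card (Phi K V S b)) * MAP V S b \<Lambda> X = (\<Sum>\<phi>\<in>Phi K V S b. MAP V S b \<Lambda> X)"
    by simp
  also have "\<dots> = (\<Sum>\<phi>\<in>Phi K V S b. \<Sum>G\<in>graphs V.
       sbm_prob V \<phi> \<Lambda> G * avg_prec \<phi> (bsize V b 1 - card {v\<in>S. b v = 1}) (X G))"
    unfolding MAP_def by (simp add: expected_avg_prec_Phi[OF assms])
  also have "\<dots> = (\<Sum>G\<in>graphs V. \<Sum>\<phi>\<in>Phi K V S b.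
       sbm_prob V \<phi> \<Lambda> G * avg_prec \<phi> (bsize V b 1 - card {v\<in>S. b v = 1}) (X G))"
    by (rule sum.swap)
  finally show ?thesis .
qed

lemma Qpost_eq_posterior:
  assumes "G \<in> graphs V"
  shows "Qpost K V S b \<Lambda> G v = (\<Sum>\<phi>\<in>{\<phi>\<in>Phi K V S b. \<phi> v = 1}. sbm_prob V \<phi> \<Lambda> G) /
                                (\<Sum>\<phi>\<in>Phi K V S b. sbm_prob V \<phi> \<Lambda> G)"
proof -
  have "lik K V b \<Lambda> G \<phi> = sbm_prob V \<phi> \<Lambda> G" if "\<phi> \<in> Phi K V S b" for \<phi>
    using sbm_prob_eq_lik[OF finite_V assms PhiD[OF that]] by simp
  then have "sum (lik K V b \<Lambda> G) {\<phi>\<in>Phi K V S b. \<phi> v = 1}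
        = (\<Sum>\<phi>\<in>{\<phi>\<in>Phi K V S b. \<phi> v = 1}. sbm_prob V \<phi> \<Lambda> G)"
      and "sum (lik K V b \<Lambda> G) (Phi K V S b) = (\<Sum>\<phi>\<in>Phi K V S b. sbm_prob V \<phi> \<Lambda> G)"
    by (auto intro: sum.cong)
  then show ?thesis
    unfolding Qpost_def by simp
qed

lemma posterior_normalizer_pos: "0 < (\<Sum>\<phi>\<in>Phi K V S b. sbm_prob V \<phi> \<Lambda> G)"
  by (intro sum_pos finite_Phi[OF finite_V] Phi_nonempty sbm_prob_pos[OF PhiD(1) edge_probs])

lemma canonical_maximizes_posterior_avg_prec:
  assumes LC: "is_canonical_scheme K V S A b \<Lambda> LC" and L: "is_vn_scheme V S A L"
    and G: "G \<in> graphs V"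
  shows "(\<Sum>\<phi>\<in>Phi K V S b. sbm_prob V \<phi> \<Lambda> G * avg_prec \<phi> r (L G))
       \<le> (\<Sum>\<phi>\<in>Phi K V S b. sbm_prob V \<phi> \<Lambda> G * avg_prec \<phi> r (LC G))"
proof (cases "has_nontriv_aut V G")
  case True
  then show ?thesis
    using is_vn_schemeD(1)[OF L G] is_vn_schemeD(1)[OF is_canonical_schemeD(1)[OF LC] G] by simp
next
  case False
  have "sorted_wrt (\<lambda>u w. (\<Sum>\<phi>\<in>{\<phi>\<in>Phi K V S b. \<phi> w = 1}. sbm_prob V \<phi> \<Lambda> G)
      \<le> (\<Sum>\<phi>\<in>{\<phi>\<in>Phi K V S b. \<phi> u = 1}. sbm_prob V \<phi> \<Lambda> G)) (LC G)"
    using is_canonical_schemeD(2)[OF LC G False] posterior_normalizer_pos[of G]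
    by (simp add: Qpost_eq_posterior[OF G] divide_le_cancel)
  then show ?thesis
    using is_vn_schemeD(2)[OF L G False] is_vn_schemeD(2)[OF is_canonical_schemeD(1)[OF LC] G False]
    by (intro sum_weighted_avg_prec_le_sorted finite_Phi[OF finite_V]) auto
qed

end

theorem theorem1:
  fixes K :: nat and V S A :: "'v set" and b :: "'v \<Rightarrow> nat"
    and \<Lambda> :: "nat \<Rightarrow> nat \<Rightarrow> real"
    and LC L :: "'v set set \<Rightarrow> 'v list"
  assumes "K \<ge> 1"
    and "finite V"
    and "\<forall>v\<in>V. b v \<in> {1..K}"
    and "\<forall>i\<in>{1..K}. \<forall>j\<in>{1..K}. 0 < \<Lambda> i j \<and> \<Lambda> i j < 1 \<and> \<Lambda> i j = \<Lambda> j i"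
    and "S \<union> A = V" and "S \<inter> A = {}"
    and "bsize V b 1 - card {v\<in>S. b v = 1} \<ge> 1"
    and "is_canonical_scheme K V S A b \<Lambda> LC"
    and "is_vn_scheme V S A L"
  shows "MAP V S b \<Lambda> LC \<ge> MAP V S b \<Lambda> L"
proof -
  interpret seeded_sbm K V S A b \<Lambda>
    using assms(2-6) by unfold_locales auto
  have "real (card (Phi K V S b)) * MAP V S b \<Lambda> L \<le> real (card (Phi K V S b)) * MAP V S b \<Lambda> LC"
    unfolding MAP_average_over_Phi[OF assms(9)] MAP_average_over_Phi[OF is_canonical_schemeD(1)[OF assms(8)]]
    by (intro sum_mono canonical_maximizes_posterior_avg_prec assms(8,9))
  moreover have "0 < card (Phi K V S b)"
    using finite_Phi[OF finite_V] Phi_nonempty by (simp add: card_gt_0_iff)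
  ultimately show ?thesis
    by simp
qed

end
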